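(* Let $f_u,f_v,g_u,g_v\in\mathbb{R}$, $D_u,D_v>0$, $\beta>0$ and $\ell_0:=\ell(u_0)\in\mathbb{R}$, and set $$J_0=\begin{pmatrix} f_u & f_v\\ g_u & g_v\end{pmatrix},\qquad L=\begin{pmatrix} D_u & -\beta\ell_0\\ 0 & D_v\end{pmatrix},\qquad J_k=J_0-k^2L\quad (k\ge 0).$$ Assume $J_0$ is stable, i.e. $f_u+g_v<0$ and $f_ug_v-f_vg_u>0$. Define $A=D_ug_v+D_vf_u$, $A_1=\sqrt{D_uD_v}\ge 0$, $A_2=\sqrt{\det(J_0)}>0$ and $A_3=|f_v-g_u|\ge 0$. Then $J_k$ is reactive (for some wavenumber $k\neq 0$) if any one of the following conditions holds: (Case 1) $|\beta\,\ell_0|>2A_1$; (Case 2) $|\beta\,\ell_0|\le 2A_1$ and $J_0$ is reactive (equivalently $A_3>2A_2$); (Case 3) $|\beta\,\ell_0|\le 2A_1$, $J_0$ is not reactive (equivalently $A_3\le 2A_2$), and $$\sqrt{A_1^2-\frac{\beta^2\ell_0^2}{4}}\,\sqrt{4A_2^2-A_3^2}-\frac{(f_v+g_u)\beta\,\ell_0}{2}<A<0.$$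
   Context: This concerns the reaction–diffusion–chemotaxis system $\partial_t u=D_u\Delta u-\beta\nabla\cdot(\ell(u)\nabla v)+f(u,v)$, $\partial_t v=D_v\Delta v+g(u,v)$, linearized at a spatially homogeneous equilibrium $(u_0,v_0)$ (with $f(u_0,v_0)=g(u_0,v_0)=0$); $J_0$ is the Jacobian of $(f,g)$ at $(u_0,v_0)$ with entries $f_u=\partial f/\partial u(u_0,v_0)$ etc., and after Fourier transform in space the linearized dynamics of a mode with wavenumber $k=\|\boldsymbol\omega\|$ is $\widetilde{\mathbf w}_t=J_k\widetilde{\mathbf w}$. A real square matrix $M$ is reactive if $\max\lambda\big((M+M^T)/2\big)>0$, i.e. the largest eigenvalue of its Hermitian part is positive; "$J_k$ is reactive" means this holds for $J_k$ for at least one $k\neq0$. *)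

theory Defs
  imports "HOL-Analysis.Analysis"
begin

definition mat2 :: "real \<Rightarrow> real \<Rightarrow> real \<Rightarrow> real \<Rightarrow> real^2^2" where
  "mat2 a b c d = (\<chi> i j. if i = 1 then (if j = 1 then a else b) else (if j = 1 then c else d))"

definition herm_part :: "real^'n^'n \<Rightarrow> real^'n^'n" where
  "herm_part M = (1/2) *\<^sub>R (M + transpose M)"

definition real_eigenvalues :: "real^'n^'n \<Rightarrow> real set" where
  "real_eigenvalues M = {\<mu>. \<exists>v. v \<noteq> 0 \<and> M *v v = \<mu> *\<^sub>R v}"

definition reactive :: "real^'n^'n \<Rightarrow> bool" where
  "reactive M \<longleftrightarrow> Max (real_eigenvalues (herm_part M)) > 0"

definition J0 :: "real \<Rightarrow> real \<Rightarrow> real \<Rightarrow> real \<Rightarrow> real^2^2" where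
  "J0 fu fv gu gv = mat2 fu fv gu gv"

definition Lmat :: "real \<Rightarrow> real \<Rightarrow> real \<Rightarrow> real \<Rightarrow> real^2^2" where
  "Lmat Du Dv \<beta> l0 = mat2 Du (- \<beta> * l0) 0 Dv"

definition Jk :: "real \<Rightarrow> real \<Rightarrow> real \<Rightarrow> real \<Rightarrow> real \<Rightarrow> real \<Rightarrow> real \<Rightarrow> real \<Rightarrow> real \<Rightarrow> real^2^2" where
  "Jk fu fv gu gv Du Dv \<beta> l0 k = J0 fu fv gu gv - (k^2) *\<^sub>R Lmat Du Dv \<beta> l0"

end

theory Submission imports Defs begin

text \<open>
  Writing \<open>s = k\<^sup>2\<close>, the Hermitian part of \<open>J\<^sub>k\<close> has trace \<open>f\<^sub>u + g\<^sub>v - s (D\<^sub>u + D\<^sub>v) < 0\<close>,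
  so \<open>J\<^sub>k\<close> is reactive exactly when the determinant of its Hermitian part is negative. That
  determinant is the quadratic \<open>a s\<^sup>2 - b s + c\<close> with \<open>a = D\<^sub>uD\<^sub>v - \<beta>\<^sup>2\<ell>\<^sub>0\<^sup>2/4\<close>,
  \<open>b = A + (f\<^sub>v + g\<^sub>u)\<beta>\<ell>\<^sub>0/2\<close> and \<open>c = det J\<^sub>0 - (f\<^sub>v - g\<^sub>u)\<^sup>2/4\<close>, which takes a negative
  value at some \<open>s > 0\<close> when \<open>a < 0\<close> (Case 1), when \<open>c < 0\<close>, i.e. \<open>J\<^sub>0\<close> is reactive
  (Case 2), or when \<open>a, c \<ge> 0\<close> and \<open>b > 2\<surd>(ac)\<close>.
\<close>

lemma mat2_nth [simp]:
  "mat2 a b c d $ 1 $ 1 = a" "mat2 a b c d $ 1 $ 2 = b"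
  "mat2 a b c d $ 2 $ 1 = c" "mat2 a b c d $ 2 $ 2 = d"
  by (simp_all add: mat2_def)

lemma herm_part_mat2: "herm_part (mat2 a b c d) = mat2 a ((b + c) / 2) ((b + c) / 2) d"
  by (simp add: herm_part_def vec_eq_iff forall_2 transpose_def)

lemma real_eigenvalues_symmetric_mat2:
  "real_eigenvalues (mat2 p q q r) = {\<mu>. (p - \<mu>) * (r - \<mu>) = q\<^sup>2}"
proof (intro set_eqI iffI)
  fix \<mu> assume "\<mu> \<in> real_eigenvalues (mat2 p q q r)"
  then obtain v :: "real^2" where "v \<noteq> 0" and eigen: "mat2 p q q r *v v = \<mu> *\<^sub>R v"
    unfolding real_eigenvalues_def by blast
  have e1: "(p - \<mu>) * v$1 + q * v$2 = 0" and e2: "q * v$1 + (r - \<mu>) * v$2 = 0"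
    using eigen by (auto simp: vec_eq_iff forall_2 matrix_vector_mult_def sum_2 algebra_simps)
  \<comment> \<open>Cramer: the characteristic polynomial annihilates both coordinates of \<open>v\<close>.\<close>
  have "((p - \<mu>) * (r - \<mu>) - q\<^sup>2) * v$1 = (r - \<mu>) * ((p - \<mu>) * v$1 + q * v$2) - q * (q * v$1 + (r - \<mu>) * v$2)"
   and "((p - \<mu>) * (r - \<mu>) - q\<^sup>2) * v$2 = (p - \<mu>) * (q * v$1 + (r - \<mu>) * v$2) - q * ((p - \<mu>) * v$1 + q * v$2)"
    by (simp_all add: algebra_simps power2_eq_square)
  moreover have "v$1 \<noteq> 0 \<or> v$2 \<noteq> 0"
    using \<open>v \<noteq> 0\<close> by (auto simp: vec_eq_iff forall_2)
  ultimately show "\<mu> \<in> {\<mu>. (p - \<mu>) * (r - \<mu>) = q\<^sup>2}"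
    using e1 e2 by auto
next
  fix \<mu> assume "\<mu> \<in> {\<mu>. (p - \<mu>) * (r - \<mu>) = q\<^sup>2}"
  then have char: "(p - \<mu>) * (r - \<mu>) = q\<^sup>2" by simp
  define v :: "real^2" where "v = (if q = 0 \<and> \<mu> = p then vector [1, 0] else vector [q, \<mu> - p])"
  have "v \<noteq> 0" and "mat2 p q q r *v v = \<mu> *\<^sub>R v"
    using char by (auto simp: v_def vec_eq_iff forall_2 matrix_vector_mult_def sum_2
        algebra_simps power2_eq_square)
  then show "\<mu> \<in> real_eigenvalues (mat2 p q q r)"
    unfolding real_eigenvalues_def by blast
qed

lemma Max_char_roots_pos_iff:
  fixes a d q :: real
  shows "Max {\<mu>. (a - \<mu>) * (d - \<mu>) = q\<^sup>2} > 0 \<longleftrightarrow> a + d > 0 \<or> a * d - q\<^sup>2 < 0"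
proof -
  define s where "s = sqrt ((a + d)\<^sup>2 - 4 * (a * d - q\<^sup>2))"
  have discr: "(a + d)\<^sup>2 - 4 * (a * d - q\<^sup>2) = (a - d)\<^sup>2 + 4 * q\<^sup>2"
    by (simp add: algebra_simps power2_eq_square)
  have "(a + d)\<^sup>2 - 4 * (a * d - q\<^sup>2) \<ge> 0"
    by (subst discr) simp
  then have "s \<ge> 0" and s2: "s\<^sup>2 = (a + d)\<^sup>2 - 4 * (a * d - q\<^sup>2)"
    unfolding s_def by simp_all
  have "(a - \<mu>) * (d - \<mu>) - q\<^sup>2 = (\<mu> - (a + d + s) / 2) * (\<mu> - (a + d - s) / 2)" for \<mu>
    using s2 by (simp add: algebra_simps power2_eq_square field_simps)
  then have "(a - \<mu>) * (d - \<mu>) = q\<^sup>2 \<longleftrightarrow> \<mu> = (a + d + s) / 2 \<or> \<mu> = (a + d - s) / 2" for \<mu>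
    by (metis mult_eq_0_iff eq_iff_diff_eq_0)
  then have "{\<mu>. (a - \<mu>) * (d - \<mu>) = q\<^sup>2} = {(a + d + s) / 2, (a + d - s) / 2}"
    by blast
  then have Max_eq: "Max {\<mu>. (a - \<mu>) * (d - \<mu>) = q\<^sup>2} = (a + d + s) / 2"
    using \<open>s \<ge> 0\<close> by (simp add: max_def)
  have "a + d + s > 0 \<longleftrightarrow> a + d > 0 \<or> a * d - q\<^sup>2 < 0"
  proof -
    have "a + d + s > 0 \<longleftrightarrow> a + d > 0 \<or> \<bar>a + d\<bar> < s"
      using \<open>s \<ge> 0\<close> by linarith
    also have "\<bar>a + d\<bar> < s \<longleftrightarrow> (a + d)\<^sup>2 < s\<^sup>2"
      using \<open>s \<ge> 0\<close> by (metis abs_le_square_iff abs_of_nonneg not_le)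
    finally show ?thesis
      unfolding s2 by auto
  qed
  then show ?thesis
    unfolding Max_eq half_gt_zero_iff .
qed

lemma reactive_mat2_iff:
  "reactive (mat2 a b c d) \<longleftrightarrow> a + d > 0 \<or> a * d - ((b + c) / 2)\<^sup>2 < 0"
  unfolding reactive_def herm_part_mat2 real_eigenvalues_symmetric_mat2
  by (rule Max_char_roots_pos_iff)

lemma reactive_J0_iff:
  assumes "fu + gv < 0"
  shows "reactive (J0 fu fv gu gv) \<longleftrightarrow> fu * gv - ((fv + gu) / 2)\<^sup>2 < 0"
  using assms by (simp add: J0_def reactive_mat2_iff)

lemma Jk_eq_mat2:
  "Jk fu fv gu gv Du Dv \<beta> l0 k = mat2 (fu - k\<^sup>2 * Du) (fv + k\<^sup>2 * \<beta> * l0) gu (gv - k\<^sup>2 * Dv)"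
  by (simp add: Jk_def J0_def Lmat_def vec_eq_iff forall_2)

lemma reactive_Jk_if_quadratic_neg:
  fixes fu fv gu gv Du Dv \<beta> l0 s :: real
  assumes "s > 0"
    and "(Du * Dv - (\<beta> * l0)\<^sup>2 / 4) * s\<^sup>2 - (Du * gv + Dv * fu + (fv + gu) * \<beta> * l0 / 2) * s
          + (fu * gv - ((fv + gu) / 2)\<^sup>2) < 0"
  shows "reactive (Jk fu fv gu gv Du Dv \<beta> l0 (sqrt s))"
proof -
  have "(fu - s * Du) * (gv - s * Dv) - ((fv + s * \<beta> * l0 + gu) / 2)\<^sup>2 < 0"
    using assms(2) by (simp add: algebra_simps power2_eq_square field_simps)
  then show ?thesis
    using \<open>s > 0\<close> by (simp add: Jk_eq_mat2 reactive_mat2_iff algebra_simps)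
qed

lemma quadratic_neg_near_zero:
  fixes a b c :: real
  assumes "c < 0"
  shows "\<exists>s>0. a * s\<^sup>2 - b * s + c < 0"
proof -
  have "((\<lambda>s. a * s\<^sup>2 - b * s + c) \<longlongrightarrow> c) (at_right 0)"
    by (auto intro!: tendsto_eq_intros)
  then have "\<forall>\<^sub>F s in at_right 0. a * s\<^sup>2 - b * s + c < 0 \<and> s > 0"
    using assms by (intro eventually_conj order_tendstoD(2) eventually_at_right_less) auto
  then show ?thesis
    using eventually_happens'[OF trivial_limit_at_right_real] by blast
qed

lemma quadratic_neg_at_large:
  fixes a b c :: real
  assumes "a < 0"
  shows "\<exists>s>0. a * s\<^sup>2 - b * s + c < 0"
proof -
  \<comment> \<open>Substitute \<open>s = 1/t\<close>, which swaps the roles of \<open>a\<close> and \<open>c\<close>.\<close>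
  obtain t :: real where "t > 0" and "c * t\<^sup>2 - b * t + a < 0"
    using quadratic_neg_near_zero assms by blast
  moreover have "a * (1/t)\<^sup>2 - b * (1/t) + c = (c * t\<^sup>2 - b * t + a) / t\<^sup>2"
    using \<open>t > 0\<close> by (simp add: field_simps power2_eq_square)
  ultimately show ?thesis
    by (metis divide_neg_pos zero_less_divide_1_iff zero_less_power)
qed

lemma quadratic_neg_at_vertex:
  fixes a b c :: real
  assumes "0 \<le> a" and "0 \<le> c" and "2 * sqrt (a * c) < b"
  shows "\<exists>s>0. a * s\<^sup>2 - b * s + c < 0"
proof -
  have "b > 0"
    using assms by (smt (verit) real_sqrt_ge_zero mult_nonneg_nonneg)
  show ?thesis
  proof (cases "a = 0")
    case True
    then have "a * ((c + 1) / b)\<^sup>2 - b * ((c + 1) / b) + c < 0"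
      using \<open>b > 0\<close> by simp
    moreover have "(c + 1) / b > 0"
      using \<open>b > 0\<close> \<open>0 \<le> c\<close> by simp
    ultimately show ?thesis by blast
  next
    case False
    with \<open>0 \<le> a\<close> have "a > 0" by simp
    have "(2 * sqrt (a * c))\<^sup>2 < b\<^sup>2"
      using assms by (intro power_strict_mono) auto
    then have "4 * (a * c) < b\<^sup>2"
      using assms(1,2) by (simp add: power_mult_distrib)
    have "a * (b / (2 * a))\<^sup>2 - b * (b / (2 * a)) + c = (4 * (a * c) - b\<^sup>2) / (4 * a)"
      using \<open>a > 0\<close> by (simp add: field_simps power2_eq_square)
    also have "\<dots> < 0"
      using \<open>4 * (a * c) < b\<^sup>2\<close> \<open>a > 0\<close> by (intro divide_neg_pos) auto
    finally have "a * (b / (2 * a))\<^sup>2 - b * (b / (2 * a)) + c < 0" .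
    moreover have "b / (2 * a) > 0"
      using \<open>a > 0\<close> \<open>b > 0\<close> by simp
    ultimately show ?thesis by blast
  qed
qed

theorem proposition2:
  fixes fu fv gu gv Du Dv \<beta> l0 :: real
  assumes "Du > 0" and "Dv > 0" and "\<beta> > 0"
    and "fu + gv < 0" and "fu * gv - fv * gu > 0"
  defines "A \<equiv> Du * gv + Dv * fu"
    and "A1 \<equiv> sqrt (Du * Dv)"
    and "A2 \<equiv> sqrt (det (J0 fu fv gu gv))"
    and "A3 \<equiv> \<bar>fv - gu\<bar>"
  assumes cases:
    "\<bar>\<beta> * l0\<bar> > 2 * A1
     \<or> (\<bar>\<beta> * l0\<bar> \<le> 2 * A1 \<and> reactive (J0 fu fv gu gv))
     \<or> (\<bar>\<beta> * l0\<bar> \<le> 2 * A1 \<and> \<not> reactive (J0 fu fv gu gv) \<and>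
        sqrt (A1^2 - \<beta>^2 * l0^2 / 4) * sqrt (4 * A2^2 - A3^2) - (fv + gu) * \<beta> * l0 / 2 < A
        \<and> A < 0)"
  shows "\<exists>k::real. k \<noteq> 0 \<and> reactive (Jk fu fv gu gv Du Dv \<beta> l0 k)"
proof -
  define a where "a = Du * Dv - (\<beta> * l0)\<^sup>2 / 4"
  define b where "b = A + (fv + gu) * \<beta> * l0 / 2"
  define c where "c = fu * gv - ((fv + gu) / 2)\<^sup>2"
  have A1_sq: "(2 * A1)\<^sup>2 = 4 * (Du * Dv)"
    using assms(1,2) by (simp add: A1_def power_mult_distrib)
  have "A2\<^sup>2 = fu * gv - fv * gu"
    using assms(5) by (simp add: A2_def J0_def det_2)
  then have "4 * A2^2 - A3^2 = 4 * c"
    by (simp add: A3_def c_def field_simps power2_eq_square)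
  then have "sqrt (4 * A2^2 - A3^2) = 2 * sqrt c"
    by (simp add: real_sqrt_mult)
  have "\<exists>s>0. a * s\<^sup>2 - b * s + c < 0"
    using cases
  proof (elim disjE conjE)
    assume "\<bar>\<beta> * l0\<bar> > 2 * A1"
    then have "(2 * A1)\<^sup>2 < \<bar>\<beta> * l0\<bar>\<^sup>2"
      using assms(1,2) by (intro power_strict_mono) (auto simp: A1_def)
    then show ?thesis
      using A1_sq by (intro quadratic_neg_at_large) (simp add: a_def)
  next
    assume "reactive (J0 fu fv gu gv)"
    then show ?thesis
      using assms(4) by (intro quadratic_neg_near_zero) (simp add: c_def reactive_J0_iff)
  next
    assume "\<bar>\<beta> * l0\<bar> \<le> 2 * A1" "\<not> reactive (J0 fu fv gu gv)"
      "sqrt (A1^2 - \<beta>^2 * l0^2 / 4) * sqrt (4 * A2^2 - A3^2) - (fv + gu) * \<beta> * l0 / 2 < A"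
    have "\<bar>\<beta> * l0\<bar>\<^sup>2 \<le> (2 * A1)\<^sup>2"
      using \<open>\<bar>\<beta> * l0\<bar> \<le> 2 * A1\<close> by (intro power_mono) auto
    then have "0 \<le> a"
      using A1_sq by (simp add: a_def)
    moreover have "0 \<le> c"
      using \<open>\<not> reactive (J0 fu fv gu gv)\<close> assms(4) by (simp add: c_def reactive_J0_iff)
    moreover have "sqrt (A1^2 - \<beta>^2 * l0^2 / 4) = sqrt a"
      using A1_sq by (simp add: a_def power_mult_distrib)
    ultimately show ?thesis
      using \<open>sqrt (A1^2 - \<beta>^2 * l0^2 / 4) * sqrt (4 * A2^2 - A3^2) - (fv + gu) * \<beta> * l0 / 2 < A\<close>
        \<open>sqrt (4 * A2^2 - A3^2) = 2 * sqrt c\<close>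
      by (intro quadratic_neg_at_vertex) (simp_all add: b_def real_sqrt_mult)
  qed
  then obtain s where "s > 0" and "a * s\<^sup>2 - b * s + c < 0" by blast
  then have "reactive (Jk fu fv gu gv Du Dv \<beta> l0 (sqrt s))"
    by (intro reactive_Jk_if_quadratic_neg) (simp_all add: a_def b_def c_def A_def)
  then show ?thesis
    using \<open>s > 0\<close> by (intro exI[of _ "sqrt s"]) simp
qed

end
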